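(* Let $\mathbb{X}$ be a real or complex Banach space with norm $|\cdot|$, let $k\ge 1$ be an integer, and let $f_n:\mathbb{X}^{k+1}\to\mathbb{X}$, $n=0,1,2,\dots$, be functions. Assume there is a real number $\alpha\in(0,1)$ such that for every $n$ and all $(\xi_0,\xi_1,\dots,\xi_k)\in\mathbb{X}^{k+1}$, $$|f_n(\xi_0,\xi_1,\dots,\xi_k)|\le \alpha\max\{|\xi_0|,\dots,|\xi_k|\}.$$ Then every solution $\{x_n\}$ of the difference equation $x_{n+1}=f_n(x_n,x_{n-1},\dots,x_{n-k})$, $n\ge 0$, with initial values $x_0,x_{-1},\dots,x_{-k}\in\mathbb{X}$ satisfies, for all $n\ge 1$, $$|x_n|\le \alpha^{n/(k+1)}\max\{|x_0|,|x_{-1}|,\dots,|x_{-k}|\}.$$ In particular, the origin is globally exponentially stable.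
   Context: A solution of $x_{n+1}=f_n(x_n,\dots,x_{n-k})$ is the sequence $\{x_n\}_{n\ge -k}$ generated by iteration from given initial values $x_0,x_{-1},\dots,x_{-k}$. The origin is called globally exponentially stable if every solution satisfies $|x_n|\le c^n\mu$ for all $n$, where $c\in(0,1)$ and $\mu>0$ are real constants and $c$ does not depend on the initial values. *)

theory Defs
  imports "HOL-Analysis.Analysis"
begin

text \<open>A point of X^(k+1) is a list of length k+1: (xi_0, ..., xi_k).
  A solution is a map x :: int => 'a; only its values at indices >= -k matter.\<close>

definition is_solution :: "(nat \<Rightarrow> 'a list \<Rightarrow> 'a) \<Rightarrow> nat \<Rightarrow> (int \<Rightarrow> 'a) \<Rightarrow> bool" where
  "is_solution f k x \<longleftrightarrow>
     (\<forall>n::nat. x (int n + 1) = f n (map (\<lambda>j. x (int n - int j)) [0..<k+1]))"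

definition glob_exp_stable :: "(nat \<Rightarrow> 'a::real_normed_vector list \<Rightarrow> 'a) \<Rightarrow> nat \<Rightarrow> bool" where
  "glob_exp_stable f k \<longleftrightarrow>
     (\<exists>c::real. 0 < c \<and> c < 1 \<and>
        (\<forall>x. is_solution f k x \<longrightarrow>
           (\<exists>\<mu>::real. \<mu> > 0 \<and> (\<forall>n::int. n \<ge> - int k \<longrightarrow> norm (x n) \<le> c powr (real_of_int n) * \<mu>))))"

end

theory Submission
  imports Defs
begin

text \<open>
  Write M for the maximum of the norms of the initial values
  x 0, x (-1), ..., x (-k).  The hypothesis on f turns the difference equation
  into the scalar recurrence inequality
     |x (n+1)| \<le> \<alpha> * max {|x n|, ..., |x (n-k)|}.
  For any real sequence satisfying such an inequality we compare with the
  envelope  E m = M * \<alpha> powr (max 0 m / (k+1)):  E is antitone, equals M on the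
  initial window, and satisfies  \<alpha> * E (m-k) \<le> E (m+1).  Strong induction then
  gives u m \<le> E m for all m \<ge> -k.  Finally E m \<le> M * c powr m with
  c = \<alpha> powr (1/(k+1)) \<in> (0,1), which yields global exponential stability
  through a general introduction rule for glob_exp_stable.
\<close>

definition decay_envelope :: "real \<Rightarrow> nat \<Rightarrow> real \<Rightarrow> int \<Rightarrow> real" where
  "decay_envelope \<alpha> k M m = M * \<alpha> powr (real_of_int (max 0 m) / real (k + 1))"

lemma decay_envelope_nonpos:
  assumes "0 < \<alpha>" and "m \<le> 0"
  shows "decay_envelope \<alpha> k M m = M"
  using assms by (simp add: decay_envelope_def)

lemma decay_envelope_antimono:
  assumes "0 < \<alpha>" "\<alpha> \<le> 1" "0 \<le> M" and "m \<le> m'"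
  shows "decay_envelope \<alpha> k M m' \<le> decay_envelope \<alpha> k M m"
  unfolding decay_envelope_def
proof (rule mult_left_mono[OF _ \<open>0 \<le> M\<close>])
  have "real_of_int (max 0 m) / real (k + 1) \<le> real_of_int (max 0 m') / real (k + 1)"
    using \<open>m \<le> m'\<close> by (simp add: divide_right_mono)
  then show "\<alpha> powr (real_of_int (max 0 m') / real (k + 1))
      \<le> \<alpha> powr (real_of_int (max 0 m) / real (k + 1))"
    using assms(1,2) by (intro powr_mono') auto
qed

text \<open>One step of the recurrence gains one factor \<alpha> over the oldest value of the
  window, which is exactly what the envelope allows.\<close>

lemma decay_envelope_step:
  assumes "0 < \<alpha>" "\<alpha> \<le> 1" "0 \<le> M"
  shows "\<alpha> * decay_envelope \<alpha> k M (m - int k) \<le> decay_envelope \<alpha> k M (m + 1)"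
proof -
  define e where "e = real_of_int (max 0 (m - int k)) / real (k + 1)"
  have "max 0 (m + 1) \<le> max 0 (m - int k) + (int k + 1)" by linarith
  then have "real_of_int (max 0 (m + 1)) \<le> real_of_int (max 0 (m - int k)) + real (k + 1)"
    by linarith
  moreover have "e + 1 = (real_of_int (max 0 (m - int k)) + real (k + 1)) / real (k + 1)"
    unfolding e_def by (simp add: field_simps)
  ultimately have exponent: "real_of_int (max 0 (m + 1)) / real (k + 1) \<le> e + 1"
    by (simp add: divide_right_mono)
  have "\<alpha> * \<alpha> powr e = \<alpha> powr (e + 1)"
    using assms(1) by (simp add: powr_add)
  also have "\<dots> \<le> \<alpha> powr (real_of_int (max 0 (m + 1)) / real (k + 1))"
    using exponent assms(1,2) by (intro powr_mono') auto
  finally have "\<alpha> * \<alpha> powr e \<le> \<alpha> powr (real_of_int (max 0 (m + 1)) / real (k + 1))" .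
  from mult_left_mono[OF this \<open>0 \<le> M\<close>] show ?thesis
    unfolding decay_envelope_def e_def[symmetric] by (simp add: mult.left_commute)
qed

lemma decay_envelope_le_geometric:
  assumes "0 < \<alpha>" "\<alpha> \<le> 1" "0 \<le> M"
  shows "decay_envelope \<alpha> k M m \<le> M * (\<alpha> powr (1 / real (k + 1))) powr real_of_int m"
  unfolding decay_envelope_def
proof (rule mult_left_mono[OF _ \<open>0 \<le> M\<close>])
  have "\<alpha> powr (real_of_int (max 0 m) / real (k + 1)) \<le> \<alpha> powr (real_of_int m / real (k + 1))"
    using assms(1,2) by (intro powr_mono') (auto simp: divide_right_mono)
  also have "\<dots> = (\<alpha> powr (1 / real (k + 1))) powr real_of_int m"
    by (simp add: powr_powr)
  finally show "\<alpha> powr (real_of_int (max 0 m) / real (k + 1))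
      \<le> (\<alpha> powr (1 / real (k + 1))) powr real_of_int m" .
qed

lemma max_recurrence_decay:
  fixes u :: "int \<Rightarrow> real"
  assumes "0 < \<alpha>" "\<alpha> \<le> 1" "0 \<le> M"
    and init: "\<And>m. - int k \<le> m \<Longrightarrow> m \<le> 0 \<Longrightarrow> u m \<le> M"
    and step: "\<And>n::nat. u (int n + 1) \<le> \<alpha> * Max ((\<lambda>j. u (int n - int j)) ` {0..k})"
    and "- int k \<le> m"
  shows "u m \<le> decay_envelope \<alpha> k M m"
proof (cases "m \<le> 0")
  case True
  then show ?thesis
    using init \<open>- int k \<le> m\<close> decay_envelope_nonpos[OF \<open>0 < \<alpha>\<close>] by simp
next
  case False
  then obtain i :: nat where "m = int i" by (intro that[of "nat m"]) simp
  moreover have "u (int i) \<le> decay_envelope \<alpha> k M (int i)" for i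
  proof (induction i rule: less_induct)
    case (less i)
    show ?case
    proof (cases i)
      case 0
      then show ?thesis using init[of 0] decay_envelope_nonpos[OF \<open>0 < \<alpha>\<close>] by simp
    next
      case (Suc n)
      have window: "u (int n - int j) \<le> decay_envelope \<alpha> k M (int n - int k)" if "j \<in> {0..k}" for j
      proof -
        have "u (int n - int j) \<le> decay_envelope \<alpha> k M (int n - int j)"
        proof (cases "int n - int j \<le> 0")
          case True
          then show ?thesis
            using init that decay_envelope_nonpos[OF \<open>0 < \<alpha>\<close>] by simp
        next
          case False
          then have index: "int n - int j = int (n - j)" and "n - j < i" using Suc by auto
          from less.IH[OF \<open>n - j < i\<close>] show ?thesis unfolding index .
        qed
        also have "\<dots> \<le> decay_envelope \<alpha> k M (int n - int k)"
          using that assms(1-3) by (intro decay_envelope_antimono) auto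
        finally show ?thesis .
      qed
      have i_eq: "int i = int n + 1" using Suc by simp
      have "u (int i) \<le> \<alpha> * Max ((\<lambda>j. u (int n - int j)) ` {0..k})"
        unfolding i_eq by (rule step)
      also have "\<dots> \<le> \<alpha> * decay_envelope \<alpha> k M (int n - int k)"
        using window \<open>0 < \<alpha>\<close> by (intro mult_left_mono Max.boundedI) auto
      also have "\<dots> \<le> decay_envelope \<alpha> k M (int i)"
        unfolding i_eq by (rule decay_envelope_step[OF assms(1-3)])
      finally show ?thesis .
    qed
  qed
  ultimately show ?thesis by simp
qed

definition initial_max :: "(int \<Rightarrow> 'a::real_normed_vector) \<Rightarrow> nat \<Rightarrow> real" where
  "initial_max x k = Max ((\<lambda>j. norm (x (- int j))) ` {0..k})"

lemma initial_max_ge: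
  assumes "- int k \<le> m" and "m \<le> 0"
  shows "norm (x m) \<le> initial_max x k"
proof -
  have "nat (- m) \<in> {0..k}" and "norm (x m) = norm (x (- int (nat (- m))))" using assms by auto
  then have "norm (x m) \<in> (\<lambda>j. norm (x (- int j))) ` {0..k}" by (rule rev_image_eqI)
  then show ?thesis unfolding initial_max_def by (intro Max_ge) auto
qed

lemma initial_max_nonneg: "0 \<le> initial_max x k"
  using initial_max_ge[of k 0 x] norm_ge_zero[of "x 0"] by linarith

lemma solution_norm_recurrence:
  assumes growth: "\<And>n \<xi>. length \<xi> = k + 1 \<Longrightarrow> norm (f n \<xi>) \<le> \<alpha> * Max (norm ` set \<xi>)"
    and "is_solution f k x"
  shows "norm (x (int n + 1)) \<le> \<alpha> * Max ((\<lambda>j. norm (x (int n - int j))) ` {0..k})"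
proof -
  have "x (int n + 1) = f n (map (\<lambda>j. x (int n - int j)) [0..<k+1])"
    using \<open>is_solution f k x\<close> unfolding is_solution_def by blast
  moreover have "set [0..<k+1] = {0..k}" by auto
  then have "norm ` set (map (\<lambda>j. x (int n - int j)) [0..<k+1])
      = (\<lambda>j. norm (x (int n - int j))) ` {0..k}"
    by (simp only: set_map image_image)
  ultimately show ?thesis using growth[of "map (\<lambda>j. x (int n - int j)) [0..<k+1]" n] by simp
qed

lemma solution_le_decay_envelope:
  assumes "0 < \<alpha>" "\<alpha> \<le> 1"
    and "\<And>n \<xi>. length \<xi> = k + 1 \<Longrightarrow> norm (f n \<xi>) \<le> \<alpha> * Max (norm ` set \<xi>)"
    and "is_solution f k x" and "- int k \<le> m"
  shows "norm (x m) \<le> decay_envelope \<alpha> k (initial_max x k) m"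
  using assms(1,2) initial_max_nonneg initial_max_ge
    solution_norm_recurrence[OF assms(3,4)] assms(5)
  by (rule max_recurrence_decay)

lemma glob_exp_stableI:
  assumes "0 < c" "c < 1"
    and bound: "\<And>x. is_solution f k x \<Longrightarrow>
      \<exists>M \<ge> 0. \<forall>n \<ge> - int k. norm (x n) \<le> M * c powr real_of_int n"
  shows "glob_exp_stable f k"
  unfolding glob_exp_stable_def
proof (rule exI[of _ c], intro conjI assms(1,2) allI impI)
  fix x assume "is_solution f k x"
  then obtain M where "0 \<le> M" and M: "\<And>n. - int k \<le> n \<Longrightarrow> norm (x n) \<le> M * c powr real_of_int n"
    using bound by blast
  have "norm (x n) \<le> c powr real_of_int n * (M + 1)" if "- int k \<le> n" for n
  proof -
    have "0 < c powr real_of_int n" using \<open>0 < c\<close> by simp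
    then have "M * c powr real_of_int n \<le> c powr real_of_int n * (M + 1)"
      by (simp add: algebra_simps)
    with M[OF that] show ?thesis by linarith
  qed
  moreover have "0 < M + 1" using \<open>0 \<le> M\<close> by simp
  ultimately show "\<exists>\<mu>>0. \<forall>n \<ge> - int k. norm (x n) \<le> c powr real_of_int n * \<mu>"
    by blast
qed

theorem lemma1:
  fixes f :: "nat \<Rightarrow> 'a::banach list \<Rightarrow> 'a" and k :: nat and \<alpha> :: real
  assumes "k \<ge> 1"
    and "0 < \<alpha>" and "\<alpha> < 1"
    and "\<And>n \<xi>. length \<xi> = k + 1 \<Longrightarrow> norm (f n \<xi>) \<le> \<alpha> * Max (norm ` set \<xi>)"
  shows "(\<forall>x. is_solution f k x \<longrightarrow>
            (\<forall>n::nat. n \<ge> 1 \<longrightarrow>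
               norm (x (int n)) \<le> \<alpha> powr (real n / real (k + 1)) *
                 Max ((\<lambda>j. norm (x (- int j))) ` {0..k})))
         \<and> glob_exp_stable f k"
proof
  have envelope: "norm (x m) \<le> decay_envelope \<alpha> k (initial_max x k) m"
    if "is_solution f k x" "- int k \<le> m" for x m
    using solution_le_decay_envelope[OF assms(2) _ assms(4)] that \<open>\<alpha> < 1\<close> by simp
  show "\<forall>x. is_solution f k x \<longrightarrow> (\<forall>n::nat. n \<ge> 1 \<longrightarrow>
      norm (x (int n)) \<le> \<alpha> powr (real n / real (k + 1)) * Max ((\<lambda>j. norm (x (- int j))) ` {0..k}))"
  proof (intro allI impI)
    fix x and n :: nat assume "is_solution f k x"
    from envelope[OF this, of "int n"]
    show "norm (x (int n)) \<le> \<alpha> powr (real n / real (k + 1)) * Max ((\<lambda>j. norm (x (- int j))) ` {0..k})"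
      by (simp add: decay_envelope_def initial_max_def mult.commute)
  qed
  define c where "c = \<alpha> powr (1 / real (k + 1))"
  have "0 < c" "c < 1"
    using assms(2,3) powr_less_mono2[of "1 / real (k + 1)" \<alpha> 1] by (auto simp: c_def)
  moreover have "\<exists>M \<ge> 0. \<forall>m \<ge> - int k. norm (x m) \<le> M * c powr real_of_int m"
    if "is_solution f k x" for x
  proof (intro exI[of _ "initial_max x k"] conjI allI impI initial_max_nonneg)
    fix m assume "- int k \<le> m"
    have "decay_envelope \<alpha> k (initial_max x k) m \<le> initial_max x k * c powr real_of_int m"
      unfolding c_def using decay_envelope_le_geometric[OF assms(2) _ initial_max_nonneg] \<open>\<alpha> < 1\<close>
      by simp
    with envelope[OF that \<open>- int k \<le> m\<close>]
    show "norm (x m) \<le> initial_max x k * c powr real_of_int m" by linarith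
  qed
  ultimately show "glob_exp_stable f k" by (rule glob_exp_stableI)
qed

end
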